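(* Let $\Gamma^*$ be a group of permutations of $\mathbb Q\times\mathbb Z$ with $\Gamma^*\supseteq\Gamma(+1)$. If $\Gamma^*$ contains at least one negative permutation, then $\Gamma^*$ contains all negative permutations of $\mathbb Q\times\mathbb Z$.
   Context: $\mathbb Q\times\mathbb Z$ denotes the set $\mathbb Q\times\mathbb Z$ with the lexicographic order. A vertical is a set $\{r\}\times\mathbb Z$. A permutation is systemic if it maps every vertical onto a vertical; a systemic permutation is positive if it preserves the order on each vertical and negative if it reverses the order on each vertical. $\Gamma(+1)$ is the group of all positive permutations of $\mathbb Q\times\mathbb Z$ (the automorphism group of the successor relation). *)

theory Defs
  imports Main "HOL.Rat"
begin

definition lex_less :: "rat \<times> int \<Rightarrow> rat \<times> int \<Rightarrow> bool" where
  "lex_less p q \<longleftrightarrow> fst p < fst q \<or> (fst p = fst q \<and> snd p < snd q)"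

definition vertical :: "rat \<Rightarrow> (rat \<times> int) set" where
  "vertical r = {r} \<times> (UNIV :: int set)"

definition permutation_QZ :: "(rat \<times> int \<Rightarrow> rat \<times> int) \<Rightarrow> bool" where
  "permutation_QZ f \<longleftrightarrow> bij f"

definition systemic :: "(rat \<times> int \<Rightarrow> rat \<times> int) \<Rightarrow> bool" where
  "systemic f \<longleftrightarrow> permutation_QZ f \<and> (\<forall>r. \<exists>s. f ` vertical r = vertical s)"

definition positive_perm :: "(rat \<times> int \<Rightarrow> rat \<times> int) \<Rightarrow> bool" where
  "positive_perm f \<longleftrightarrow> systemic f \<and>
     (\<forall>r m n. m < n \<longrightarrow> lex_less (f (r, m)) (f (r, n)))"

definition negative_perm :: "(rat \<times> int \<Rightarrow> rat \<times> int) \<Rightarrow> bool" where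
  "negative_perm f \<longleftrightarrow> systemic f \<and>
     (\<forall>r m n. m < n \<longrightarrow> lex_less (f (r, n)) (f (r, m)))"

definition perm_group :: "(rat \<times> int \<Rightarrow> rat \<times> int) set \<Rightarrow> bool" where
  "perm_group G \<longleftrightarrow> (\<forall>f\<in>G. permutation_QZ f) \<and> id \<in> G \<and>
     (\<forall>f\<in>G. \<forall>g\<in>G. f \<circ> g \<in> G) \<and> (\<forall>f\<in>G. inv f \<in> G)"

definition Gamma_plus1 :: "(rat \<times> int \<Rightarrow> rat \<times> int) set" where
  "Gamma_plus1 = {f. positive_perm f}"

end

theory Submission
  imports Defs
begin

text \<open>If \<open>f0 \<in> G\<close> is negative, then for every negative \<open>h\<close> the permutation
  \<open>h \<circ> inv f0\<close> reverses the order on each vertical twice, hence is positive and lies in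
  \<open>Gamma_plus1 \<subseteq> G\<close>; so \<open>h = (h \<circ> inv f0) \<circ> f0 \<in> G\<close>.\<close>

lemma systemic_bij: "systemic f \<Longrightarrow> bij f"
  unfolding systemic_def permutation_QZ_def by blast

lemma systemic_fst_eq:
  assumes "systemic f"
  shows "fst (f (r, m)) = fst (f (r, n))"
proof -
  obtain s where "f ` vertical r = vertical s"
    using assms unfolding systemic_def by blast
  then have "f (r, m) \<in> vertical s" "f (r, n) \<in> vertical s"
    unfolding vertical_def by blast+
  then show ?thesis
    unfolding vertical_def by auto
qed

lemma systemic_lex_less_iff:
  assumes "systemic f"
  shows "lex_less (f (r, m)) (f (r, n)) \<longleftrightarrow> snd (f (r, m)) < snd (f (r, n))"
  using systemic_fst_eq[OF assms] unfolding lex_less_def by (metis less_irrefl)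

lemma negative_perm_snd_less:
  assumes "negative_perm f" and "m < n"
  shows "snd (f (r, n)) < snd (f (r, m))"
  using assms systemic_lex_less_iff unfolding negative_perm_def by blast

lemma systemic_comp:
  assumes "systemic f" and "systemic g"
  shows "systemic (f \<circ> g)"
proof -
  have "\<exists>t. (f \<circ> g) ` vertical r = vertical t" for r
  proof -
    obtain s where "g ` vertical r = vertical s"
      using assms(2) unfolding systemic_def by blast
    moreover obtain t where "f ` vertical s = vertical t"
      using assms(1) unfolding systemic_def by blast
    ultimately show ?thesis
      by (metis image_comp)
  qed
  moreover have "bij (f \<circ> g)"
    using assms by (simp add: systemic_bij bij_comp)
  ultimately show ?thesis
    unfolding systemic_def permutation_QZ_def by blast
qed

lemma systemic_inv:
  assumes "systemic f"
  shows "systemic (inv f)"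
proof -
  have bij: "bij f"
    using assms by (rule systemic_bij)
  have "\<exists>s. inv f ` vertical r = vertical s" for r
  proof -
    define s where "s = fst (inv f (r, 0))"
    obtain t where t: "f ` vertical s = vertical t"
      using assms unfolding systemic_def by blast
    have "inv f (r, 0) \<in> vertical s"
      unfolding vertical_def s_def by (cases "inv f (r, 0)") auto
    then have "(r, 0) \<in> vertical t"
      using t bij by (metis bij_inv_eq_iff image_eqI)
    then have "t = r"
      unfolding vertical_def by auto
    then have "inv f ` vertical r = vertical s"
      using t bij by (metis bij_is_inj image_inv_f_f)
    then show ?thesis
      by blast
  qed
  then show ?thesis
    using bij bij_imp_bij_inv unfolding systemic_def permutation_QZ_def by blast
qed

lemma negative_perm_inv:
  assumes neg: "negative_perm f"
  shows "negative_perm (inv f)"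
proof -
  have sys: "systemic (inv f)"
    using neg systemic_inv unfolding negative_perm_def by blast
  have bij: "bij f"
    using neg systemic_bij unfolding negative_perm_def by blast
  have "snd (inv f (r, n)) < snd (inv f (r, m))" if "m < n" for r m n
  proof -
    obtain s a b where a: "inv f (r, n) = (s, a)" and b: "inv f (r, m) = (s, b)"
      using systemic_fst_eq[OF sys, of r n m] by (metis prod.collapse)
    have "f (s, a) = (r, n)" "f (s, b) = (r, m)"
      using a b bij by (metis bij_inv_eq_iff)+
    then have "\<not> b < a" and "a \<noteq> b"
      using negative_perm_snd_less[OF neg, of b a s] \<open>m < n\<close> by auto
    then show ?thesis
      using a b by simp
  qed
  then show ?thesis
    using sys systemic_lex_less_iff unfolding negative_perm_def by blast
qed

lemma negative_perm_comp_positive: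
  assumes h: "negative_perm h" and g: "negative_perm g"
  shows "positive_perm (h \<circ> g)"
proof -
  have sys: "systemic (h \<circ> g)"
    using h g systemic_comp unfolding negative_perm_def by blast
  have "lex_less (h (g (r, m))) (h (g (r, n)))" if "m < n" for r m n
  proof -
    obtain s a b where a: "g (r, n) = (s, a)" and b: "g (r, m) = (s, b)"
      using systemic_fst_eq[of g r n m] g unfolding negative_perm_def by (metis prod.collapse)
    have "a < b"
      using negative_perm_snd_less[OF g \<open>m < n\<close>, of r] a b by simp
    then show ?thesis
      using h a b unfolding negative_perm_def by simp
  qed
  then show ?thesis
    using sys unfolding positive_perm_def by simp
qed

theorem proposition3:
  fixes G :: "(rat \<times> int \<Rightarrow> rat \<times> int) set"
  assumes "perm_group G"
    and "Gamma_plus1 \<subseteq> G"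
    and "\<exists>f\<in>G. negative_perm f"
  shows "{f. negative_perm f} \<subseteq> G"
proof
  fix h
  assume "h \<in> {f. negative_perm f}"
  then have h: "negative_perm h" by simp
  obtain f0 where f0: "f0 \<in> G" "negative_perm f0"
    using assms(3) by blast
  have "positive_perm (h \<circ> inv f0)"
    using negative_perm_comp_positive[OF h negative_perm_inv[OF f0(2)]] .
  then have "h \<circ> inv f0 \<in> G"
    using assms(2) unfolding Gamma_plus1_def by blast
  then have "h \<circ> inv f0 \<circ> f0 \<in> G"
    using f0(1) assms(1) unfolding perm_group_def by blast
  moreover have "h \<circ> inv f0 \<circ> f0 = h"
    using f0(2) systemic_bij unfolding negative_perm_def
    by (simp add: comp_assoc bij_is_inj)
  ultimately show "h \<in> G" by simp
qed

end
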